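(* Let $M=M(S^2;\frac{q_1}{p_1},\frac{q_2}{p_2},\frac{q_3}{p_3})$ with $e(M)\neq0$. Suppose that for some $\{i,j,k\}=\{1,2,3\}$ we have $d:=\gcd(p_i,p_j)>2$ and $s:=\gcd(p_ip_j/d,\,p_k)>2$. If $d\neq4$ or $s\neq4$, then $x_M>0$ (for all $q_1,q_2,q_3$ with $q_i$ coprime to $p_i$).
   Context: $M(S^2;\frac{q_1}{p_1},\frac{q_2}{p_2},\frac{q_3}{p_3})$ ($(p_i,q_i)$ coprime, $p_i\ge1$) is the closed Seifert manifold obtained from $S_{0,3}\times S^1$ by gluing solid tori whose meridians are $p_ic_i+q_ih_i$; $e(M)=\sum_iq_i/p_i$; $\pi_1(M)=\langle c_1,c_2,c_3,h\mid [c_i,h]=1=c_i^{p_i}h^{q_i},\ c_1c_2c_3=1\rangle$. An abelian character is the trace of a diagonal representation $\pi_1(M)\to\mathrm{SL}_2(\mathbb{C})$; it is exceptional if it is the trace of a representation $\rho$ with $\rho(h)=\pm I$ and $\rho(c_i)\neq\pm I$ for $i=1,2,3$; $x_M$ is the number of exceptional abelian characters. *)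

theory Defs
  imports "HOL-Analysis.Analysis"
begin

type_synonym mat2 = "complex^2^2"

datatype gen = Gc1 | Gc2 | Gc3 | Gh

fun cg :: "nat \<Rightarrow> gen" where
  "cg (Suc 0) = Gc1"
| "cg (Suc (Suc 0)) = Gc2"
| "cg _ = Gc3"

definition mpow :: "mat2 \<Rightarrow> nat \<Rightarrow> mat2" where
  "mpow A n = (((**) A) ^^ n) (mat 1)"

definition zpow :: "mat2 \<Rightarrow> int \<Rightarrow> mat2" where
  "zpow A k = (if 0 \<le> k then mpow A (nat k) else mpow (matrix_inv A) (nat (- k)))"

text \<open>A representation pi_1(M) -> SL(2,C), given by the images of the generators,
  for M = M(S^2; q1/p1, q2/p2, q3/p3):
  pi_1(M) = < c1,c2,c3,h | [ci,h]=1 = ci^pi h^qi, c1 c2 c3 = 1 >.\<close>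
definition is_rep :: "(nat \<Rightarrow> int) \<Rightarrow> (nat \<Rightarrow> int) \<Rightarrow> (gen \<Rightarrow> mat2) \<Rightarrow> bool" where
  "is_rep p q \<rho> \<longleftrightarrow>
     (\<forall>g. det (\<rho> g) = 1) \<and>
     (\<forall>i\<in>{1,2,3}. \<rho> (cg i) ** \<rho> Gh = \<rho> Gh ** \<rho> (cg i)
                  \<and> zpow (\<rho> (cg i)) (p i) ** zpow (\<rho> Gh) (q i) = mat 1) \<and>
     \<rho> Gc1 ** \<rho> Gc2 ** \<rho> Gc3 = mat 1"

text \<open>Elements of pi_1(M) are represented by words in the generators and their
  inverses (True = generator, False = its inverse).\<close>
type_synonym word = "(gen \<times> bool) list"

definition eval_word :: "(gen \<Rightarrow> mat2) \<Rightarrow> word \<Rightarrow> mat2" where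
  "eval_word \<rho> w = foldr (\<lambda>(g, b) A. (if b then \<rho> g else matrix_inv (\<rho> g)) ** A) w (mat 1)"

definition character :: "(gen \<Rightarrow> mat2) \<Rightarrow> word \<Rightarrow> complex" where
  "character \<rho> = (\<lambda>w. trace (eval_word \<rho> w))"

definition is_diagonal :: "mat2 \<Rightarrow> bool" where
  "is_diagonal A \<longleftrightarrow> A $ 1 $ 2 = 0 \<and> A $ 2 $ 1 = 0"

definition abelian_characters :: "(nat \<Rightarrow> int) \<Rightarrow> (nat \<Rightarrow> int) \<Rightarrow> (word \<Rightarrow> complex) set" where
  "abelian_characters p q =
     {character \<rho> | \<rho>. is_rep p q \<rho> \<and> (\<forall>g. is_diagonal (\<rho> g))}"

definition exceptional_abelian_characters ::
  "(nat \<Rightarrow> int) \<Rightarrow> (nat \<Rightarrow> int) \<Rightarrow> (word \<Rightarrow> complex) set" where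
  "exceptional_abelian_characters p q =
     {chr \<in> abelian_characters p q.
        \<exists>\<rho>. is_rep p q \<rho> \<and> character \<rho> = chr \<and>
             (\<rho> Gh = mat 1 \<or> \<rho> Gh = - mat 1) \<and>
             (\<forall>i\<in>{1,2,3}. \<rho> (cg i) \<noteq> mat 1 \<and> \<rho> (cg i) \<noteq> - mat 1)}"

text \<open>x_M = number of exceptional abelian characters (as an extended natural,
  so that "x_M > 0" means the set is nonempty).\<close>
definition x_M :: "(nat \<Rightarrow> int) \<Rightarrow> (nat \<Rightarrow> int) \<Rightarrow> enat" where
  "x_M p q = (if finite (exceptional_abelian_characters p q)
              then enat (card (exceptional_abelian_characters p q)) else \<infinity>)"

definition euler_num :: "(nat \<Rightarrow> int) \<Rightarrow> (nat \<Rightarrow> int) \<Rightarrow> rat" where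
  "euler_num p q = (\<Sum>i\<in>{1,2,3::nat}. of_int (q i) / of_int (p i))"

end

theory Submission
  imports Defs "HOL-Library.Real_Mod"
begin

(* A diagonal representation with rho(h) = I and rho(c_l) = diag(z_l, 1/z_l), z_l = exp(2 pi i x_l),
   satisfies the relations of pi_1(M) as soon as every p_l x_l and x_1 + x_2 + x_3 are integers, and
   it is exceptional when no 2 x_l is an integer.

   Take x_k = -1/s, admissible because s divides p_k and s > 2. As s divides lcm(p_i, p_j), Bezout
   writes 1/s = y_i + y_j with p_i y_i and p_j y_j integers, and the same holds for the shifts
   x_i = y_i + r/d, x_j = y_j - r/d with r an integer, since d divides p_i and p_j. Two values of r
   making 2 x_i integral differ by a multiple of d/gcd(d,2), and likewise for x_j. For d <> 4 neither
   condition holds at two of 0, 1, 2; for d = 4 they cannot both be satisfiable, because adding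
   them would make 4/s integral. Either way some r avoids both. *)

definition diag2 :: "complex \<Rightarrow> mat2" where
  "diag2 z = (\<chi> a b. if a = b then (if a = 1 then z else inverse z) else 0)"

lemma diag2_nth [simp]:
  "diag2 z $ 1 $ 1 = z" "diag2 z $ 2 $ 2 = inverse z" "diag2 z $ 1 $ 2 = 0" "diag2 z $ 2 $ 1 = 0"
  by (simp_all add: diag2_def)

lemma mat2_eq_iff:
  "(A::mat2) = B \<longleftrightarrow> A$1$1 = B$1$1 \<and> A$1$2 = B$1$2 \<and> A$2$1 = B$2$1 \<and> A$2$2 = B$2$2"
  by (auto simp: vec_eq_iff forall_2)

lemma diag2_mult: "diag2 z ** diag2 w = diag2 (z * w)"
  by (simp add: mat2_eq_iff matrix_matrix_mult_def sum_2)

lemma diag2_1: "diag2 1 = mat 1"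
  by (simp add: mat2_eq_iff mat_def)

lemma diag2_eq_1_iff: "diag2 z = mat 1 \<longleftrightarrow> z = 1"
  by (auto simp: mat2_eq_iff mat_def)

lemma diag2_eq_minus_1_iff: "diag2 z = - mat 1 \<longleftrightarrow> z = -1"
  by (auto simp: mat2_eq_iff mat_def)

lemma det_diag2: "z \<noteq> 0 \<Longrightarrow> det (diag2 z) = 1"
  by (simp add: det_2)

lemma is_diagonal_diag2: "is_diagonal (diag2 z)"
  by (simp add: is_diagonal_def)

lemma is_diagonal_mat_1: "is_diagonal (mat 1)"
  by (simp add: is_diagonal_def mat_def)

lemma mpow_diag2: "mpow (diag2 z) n = diag2 (z ^ n)"
  by (induction n) (simp_all add: mpow_def diag2_1 diag2_mult mult.commute)

lemma zpow_diag2: "0 \<le> k \<Longrightarrow> zpow (diag2 z) k = diag2 (z ^ nat k)"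
  by (simp add: zpow_def mpow_diag2)

lemma mpow_mat_1: "mpow (mat 1) n = mat 1"
  by (induction n) (simp_all add: mpow_def)

lemma matrix_inv_mat_1: "matrix_inv (mat 1 :: 'a::semiring_1^'n^'n) = mat 1"
proof -
  have "mat 1 ** matrix_inv (mat 1 :: 'a^'n^'n) = mat 1"
    unfolding matrix_inv_def by (rule someI2[of _ "mat 1"]) auto
  then show ?thesis by simp
qed

lemma zpow_mat_1: "zpow (mat 1) k = mat 1"
  by (simp add: zpow_def mpow_mat_1 matrix_inv_mat_1)

lemma cis_2pi_eq_1_iff: "cis (2 * pi * x) = 1 \<longleftrightarrow> x \<in> \<int>"
  by (auto simp: cis_eq_1_iff elim!: Ints_cases)

definition angle_rep :: "(nat \<Rightarrow> real) \<Rightarrow> gen \<Rightarrow> mat2" where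
  "angle_rep x g = (case g of
      Gc1 \<Rightarrow> diag2 (cis (2 * pi * x 1))
    | Gc2 \<Rightarrow> diag2 (cis (2 * pi * x 2))
    | Gc3 \<Rightarrow> diag2 (cis (2 * pi * x 3))
    | Gh \<Rightarrow> mat 1)"

lemma angle_rep_cg: "l \<in> {1,2,3} \<Longrightarrow> angle_rep x (cg l) = diag2 (cis (2 * pi * x l))"
  by (auto simp: angle_rep_def numeral_2_eq_2 numeral_3_eq_3)

lemma angle_rep_h: "angle_rep x Gh = mat 1"
  by (simp add: angle_rep_def)

lemma is_diagonal_angle_rep: "is_diagonal (angle_rep x g)"
  by (cases g) (simp_all add: angle_rep_def is_diagonal_diag2 is_diagonal_mat_1)

lemma is_rep_angle_rep:
  fixes x :: "nat \<Rightarrow> real"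
  assumes "\<forall>l\<in>{1,2,3}. p l \<ge> 0 \<and> of_int (p l) * x l \<in> \<int>" "x 1 + x 2 + x 3 \<in> \<int>"
  shows "is_rep p q (angle_rep x)"
  unfolding is_rep_def
proof (intro conjI ballI allI)
  fix g
  show "det (angle_rep x g) = 1"
    by (cases g) (simp_all add: angle_rep_def det_diag2)
next
  fix l :: nat
  assume l: "l \<in> {1,2,3}"
  then have "p l \<ge> 0" "of_int (p l) * x l \<in> \<int>"
    using assms(1) by blast+
  show "angle_rep x (cg l) ** angle_rep x Gh = angle_rep x Gh ** angle_rep x (cg l)"
    by (simp add: angle_rep_h)
  have "cis (2 * pi * x l) ^ nat (p l) = cis (2 * pi * (of_int (p l) * x l))"
    unfolding Complex.DeMoivre using \<open>p l \<ge> 0\<close> by (simp add: mult_ac)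
  also have "\<dots> = 1"
    using \<open>of_int (p l) * x l \<in> \<int>\<close> by (simp add: cis_2pi_eq_1_iff)
  finally show "zpow (angle_rep x (cg l)) (p l) ** zpow (angle_rep x Gh) (q l) = mat 1"
    using \<open>p l \<ge> 0\<close> l by (simp add: angle_rep_cg angle_rep_h zpow_diag2 zpow_mat_1 diag2_1)
next
  have "angle_rep x Gc1 ** angle_rep x Gc2 ** angle_rep x Gc3 = diag2 (cis (2 * pi * (x 1 + x 2 + x 3)))"
    by (simp add: angle_rep_def diag2_mult cis_mult algebra_simps)
  then show "angle_rep x Gc1 ** angle_rep x Gc2 ** angle_rep x Gc3 = mat 1"
    using assms(2) by (simp add: cis_2pi_eq_1_iff diag2_1)
qed

lemma angle_rep_cg_neq_pm_1:
  assumes "l \<in> {1,2,3}" "2 * x l \<notin> \<int>"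
  shows "angle_rep x (cg l) \<noteq> mat 1 \<and> angle_rep x (cg l) \<noteq> - mat 1"
proof -
  have "cis (2 * pi * (2 * x l)) \<noteq> 1"
    unfolding cis_2pi_eq_1_iff by fact
  then have "cis (2 * pi * x l) ^ 2 \<noteq> 1"
    unfolding Complex.DeMoivre by (simp add: mult_ac)
  then have "cis (2 * pi * x l) \<noteq> 1 \<and> cis (2 * pi * x l) \<noteq> -1"
    by auto
  then show ?thesis
    using assms(1) by (simp add: angle_rep_cg diag2_eq_1_iff diag2_eq_minus_1_iff)
qed

lemma exceptional_abelian_character_of_angles:
  fixes x :: "nat \<Rightarrow> real"
  assumes "\<forall>l\<in>{1,2,3}. p l \<ge> 0 \<and> of_int (p l) * x l \<in> \<int> \<and> 2 * x l \<notin> \<int>"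
    and "x 1 + x 2 + x 3 \<in> \<int>"
  shows "character (angle_rep x) \<in> exceptional_abelian_characters p q"
proof -
  have "is_rep p q (angle_rep x)"
    using assms by (intro is_rep_angle_rep) auto
  moreover have "\<forall>l\<in>{1,2,3}. angle_rep x (cg l) \<noteq> mat 1 \<and> angle_rep x (cg l) \<noteq> - mat 1"
    using assms(1) angle_rep_cg_neq_pm_1 by blast
  ultimately show ?thesis
    unfolding exceptional_abelian_characters_def abelian_characters_def
    using is_diagonal_angle_rep angle_rep_h by blast
qed

lemma x_M_pos_iff: "x_M p q > 0 \<longleftrightarrow> exceptional_abelian_characters p q \<noteq> {}"
  by (auto simp: x_M_def zero_enat_def card_gt_0_iff)

lemma int_dvd_4_gt_2_eq_4:
  fixes d :: int
  assumes "d dvd 4" "d > 2"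
  shows "d = 4"
proof -
  have "d \<le> 4"
    using \<open>d dvd 4\<close> by (simp add: zdvd_imp_le)
  then show ?thesis
    using assms by (cases "d = 3") auto
qed

lemma exists_outside_two_sparse_sets:
  fixes d :: int and A B :: "int set"
  assumes "d > 2"
    and sparse_A: "\<And>r r'. r \<in> A \<Longrightarrow> r' \<in> A \<Longrightarrow> d dvd 2 * (r - r')"
    and sparse_B: "\<And>r r'. r \<in> B \<Longrightarrow> r' \<in> B \<Longrightarrow> d dvd 2 * (r - r')"
    and "d = 4 \<Longrightarrow> A = {} \<or> B = {}"
  shows "\<exists>r. r \<notin> A \<union> B"
proof -
  have "\<not> d dvd 2"
    using \<open>d > 2\<close> by (auto dest: zdvd_imp_le)
  then have no_neighbours: "\<not> {0, 1} \<subseteq> A" "\<not> {0, 1} \<subseteq> B"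
    using sparse_A[of 1 0] sparse_B[of 1 0] by auto
  show ?thesis
  proof (cases "d = 4")
    case True
    then show ?thesis
      using no_neighbours \<open>d = 4 \<Longrightarrow> A = {} \<or> B = {}\<close> by blast
  next
    case False
    have "\<not> d dvd 4"
      using \<open>d > 2\<close> False int_dvd_4_gt_2_eq_4 by blast
    then have "\<not> {0, 2} \<subseteq> A" "\<not> {1, 2} \<subseteq> A" "\<not> {0, 2} \<subseteq> B" "\<not> {1, 2} \<subseteq> B"
      using \<open>\<not> d dvd 2\<close> sparse_A[of 2 0] sparse_A[of 2 1] sparse_B[of 2 0] sparse_B[of 2 1]
      by auto
    then show ?thesis
      using no_neighbours by blast
  qed
qed

lemma exists_fractions_sum_eq_inverse:
  fixes p1 p2 s :: int
  assumes "p1 > 0" "p2 > 0" "s dvd lcm p1 p2"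
  shows "\<exists>y1 y2 :: real. of_int p1 * y1 \<in> \<int> \<and> of_int p2 * y2 \<in> \<int> \<and> y1 + y2 = 1 / of_int s"
proof -
  obtain u v where bezout: "u * p1 + v * p2 = gcd p1 p2"
    using bezout_int by blast
  obtain m where m: "lcm p1 p2 = s * m"
    using assms(3) by (elim dvdE)
  have "lcm p1 p2 \<noteq> 0"
    using assms by simp
  then have "s \<noteq> 0" "m \<noteq> 0"
    using m by auto
  have gcd_lcm: "gcd p1 p2 * lcm p1 p2 = p1 * p2"
    using prod_gcd_lcm_int[of p1 p2] assms by simp
  define y1 :: real where "y1 = of_int (m * v) / of_int p1"
  define y2 :: real where "y2 = of_int (m * u) / of_int p2"
  have "y1 + y2 = of_int m * of_int (u * p1 + v * p2) / of_int (p1 * p2)"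
    using assms by (simp add: y1_def y2_def field_simps)
  also have "\<dots> = of_int m * of_int (gcd p1 p2) / of_int (gcd p1 p2 * (s * m))"
    by (simp only: bezout gcd_lcm flip: m)
  also have "\<dots> = 1 / of_int s"
    using \<open>m \<noteq> 0\<close> assms by simp
  finally show ?thesis
    using assms by (intro exI[of _ y1] exI[of _ y2]) (simp add: y1_def y2_def)
qed

lemma dvd_of_shifts_in_Ints:
  fixes c d r r' :: int and y :: real
  assumes "d \<noteq> 0" "of_int c * (y + of_int r / of_int d) \<in> \<int>" "of_int c * (y + of_int r' / of_int d) \<in> \<int>"
  shows "d dvd c * (r - r')"
proof -
  have "of_int c * (y + of_int r / of_int d) - of_int c * (y + of_int r' / of_int d) \<in> \<int>"
    using assms(2,3) by (rule Ints_diff)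
  also have "of_int c * (y + of_int r / of_int d) - of_int c * (y + of_int r' / of_int d)
      = of_int (c * (r - r')) / of_int d"
    using \<open>d \<noteq> 0\<close> by (simp add: field_simps)
  finally show ?thesis
    using \<open>d \<noteq> 0\<close> by (simp only: of_int_div_of_int_in_Ints_iff) simp
qed

lemma shift_in_Ints_if_dvd:
  fixes d p r :: int and y :: real
  assumes "of_int p * y \<in> \<int>" "d dvd p"
  shows "of_int p * (y + of_int r / of_int d) \<in> \<int>"
proof (cases "d = 0")
  case False
  have "of_int p * (y + of_int r / of_int d) = of_int p * y + of_int (p div d * r)"
    using \<open>d dvd p\<close> False by (auto simp: field_simps elim!: dvdE)
  then show ?thesis
    using assms(1) by simp
qed (use assms in simp)

lemma exists_non_half_integral_fractions:
  fixes p1 p2 s :: int and y1 y2 :: real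
  assumes "of_int p1 * y1 \<in> \<int>" "of_int p2 * y2 \<in> \<int>" "y1 + y2 = 1 / of_int s"
    and "gcd p1 p2 > 2" "s > 2" "gcd p1 p2 \<noteq> 4 \<or> s \<noteq> 4"
  shows "\<exists>x1 x2 :: real. of_int p1 * x1 \<in> \<int> \<and> of_int p2 * x2 \<in> \<int> \<and> x1 + x2 = 1 / of_int s
           \<and> 2 * x1 \<notin> \<int> \<and> 2 * x2 \<notin> \<int>"
proof -
  define d where "d = gcd p1 p2"
  define A where "A = {r. 2 * (y1 + of_int r / of_int d) \<in> \<int>}"
  define B where "B = {r. 2 * (y2 - of_int r / of_int d) \<in> \<int>}"
  have "d > 2"
    using assms(4) by (simp add: d_def)
  have "d = 4 \<Longrightarrow> A = {} \<or> B = {}"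
  proof (rule ccontr)
    assume "d = 4" and "\<not> (A = {} \<or> B = {})"
    then obtain r r' where "r \<in> A" "r' \<in> B"
      by blast
    then have "2 * (2 * (y1 + of_int r / of_int d) + 2 * (y2 - of_int r' / of_int d)) \<in> \<int>"
      unfolding A_def B_def by (metis Ints_add Ints_mult Ints_numeral mem_Collect_eq)
    also have "2 * (2 * (y1 + of_int r / of_int d) + 2 * (y2 - of_int r' / of_int d)) = of_int 4 / of_int s + of_int (r - r')"
      using \<open>d = 4\<close> assms(3) by (simp add: field_simps)
    finally have "s dvd 4"
      using \<open>s > 2\<close> by (simp only: add_in_Ints_iff_right Ints_of_int of_int_div_of_int_in_Ints_iff) simp
    then show False
      using assms(5,6) \<open>d = 4\<close> int_dvd_4_gt_2_eq_4 unfolding d_def by blast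
  qed
  moreover have "d dvd 2 * (r - r')" if "r \<in> A" "r' \<in> A" for r r'
    using that dvd_of_shifts_in_Ints[of d 2 y1 r r'] \<open>d > 2\<close> by (simp add: A_def)
  moreover have "d dvd 2 * (r - r')" if "r \<in> B" "r' \<in> B" for r r'
  proof -
    have "2 * (- y2 + of_int t / of_int d) \<in> \<int>" if "t \<in> B" for t
      using that minus_in_Ints_iff[of "2 * (y2 - of_int t / of_int d)"] by (simp add: B_def)
    then show ?thesis
      using that dvd_of_shifts_in_Ints[of d 2 "- y2" r r'] \<open>d > 2\<close> by simp
  qed
  ultimately obtain r where r: "r \<notin> A" "r \<notin> B"
    using exists_outside_two_sparse_sets[of d A B] \<open>d > 2\<close> by blast
  have "of_int p1 * (y1 + of_int r / of_int d) \<in> \<int>"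
    using shift_in_Ints_if_dvd[of p1 y1 d r] assms(1) by (simp add: d_def)
  moreover have "of_int p2 * (y2 - of_int r / of_int d) \<in> \<int>"
    using shift_in_Ints_if_dvd[of p2 y2 d "- r"] assms(2) by (simp add: d_def)
  ultimately show ?thesis
    using r assms(3) unfolding A_def B_def
    by (intro exI[of _ "y1 + of_int r / of_int d"] exI[of _ "y2 - of_int r / of_int d"]) auto
qed

lemma exists_exceptional_angles:
  fixes p :: "nat \<Rightarrow> int" and i j k :: nat
  assumes "i \<noteq> j" "i \<noteq> k" "j \<noteq> k" "p i > 0" "p j > 0" "p k > 0"
    and "gcd (p i) (p j) > 2" "gcd (lcm (p i) (p j)) (p k) > 2"
    and "gcd (p i) (p j) \<noteq> 4 \<or> gcd (lcm (p i) (p j)) (p k) \<noteq> 4"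
  shows "\<exists>x :: nat \<Rightarrow> real. (\<forall>l\<in>{i,j,k}. of_int (p l) * x l \<in> \<int> \<and> 2 * x l \<notin> \<int>) \<and> x i + x j + x k = 0"
proof -
  define s where "s = gcd (lcm (p i) (p j)) (p k)"
  have "s > 2" "s dvd lcm (p i) (p j)" "s dvd p k"
    using assms(8) by (simp_all add: s_def)
  then obtain y1 y2 :: real where "of_int (p i) * y1 \<in> \<int>" "of_int (p j) * y2 \<in> \<int>" "y1 + y2 = 1 / of_int s"
    using exists_fractions_sum_eq_inverse[OF assms(4,5) \<open>s dvd lcm (p i) (p j)\<close>] by blast
  then obtain x1 x2 :: real where x12: "of_int (p i) * x1 \<in> \<int>" "of_int (p j) * x2 \<in> \<int>" "x1 + x2 = 1 / of_int s"
      "2 * x1 \<notin> \<int>" "2 * x2 \<notin> \<int>"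
    using exists_non_half_integral_fractions \<open>s > 2\<close> assms(7,9) unfolding s_def by blast
  define x where "x l = (if l = i then x1 else if l = j then x2 else - 1 / of_int s)" for l
  have "\<not> s dvd 2"
    using \<open>s > 2\<close> by (auto dest: zdvd_imp_le)
  then have "2 * (- 1 / of_int s) \<notin> (\<int> :: real set)"
    using \<open>s > 2\<close> fraction_not_in_Ints[of s 2, where 'a=real] by simp
  moreover have "of_int (p k) * (- 1 / of_int s) \<in> (\<int> :: real set)"
    using \<open>s dvd p k\<close> by (simp add: of_int_div_of_int_in_Ints_iff)
  ultimately show ?thesis
    using x12 assms(1-3) by (intro exI[of _ x]) (auto simp: x_def)
qed

theorem proposition5p6:
  fixes p q :: "nat \<Rightarrow> int" and i j k :: nat
  assumes "\<forall>l\<in>{1,2,3}. p l \<ge> 1 \<and> coprime (p l) (q l)"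
    and "euler_num p q \<noteq> 0"
    and "{i, j, k} = {1, 2, 3}"
    and "gcd (p i) (p j) > 2"
    and "gcd (p i * p j div gcd (p i) (p j)) (p k) > 2"
    and "gcd (p i) (p j) \<noteq> 4 \<or> gcd (p i * p j div gcd (p i) (p j)) (p k) \<noteq> 4"
  shows "x_M p q > 0"
proof -
  have "card {i, j, k} = 3"
    using assms(3) by simp
  then have distinct: "i \<noteq> j" "i \<noteq> k" "j \<noteq> k"
    by (auto simp: card_insert_if split: if_splits)
  have pos: "\<forall>l\<in>{i,j,k}. p l > 0"
    using assms(1,3) by auto
  then have "p i * p j div gcd (p i) (p j) = lcm (p i) (p j)"
    by (simp add: lcm_altdef_int)
  then obtain x :: "nat \<Rightarrow> real"
    where x: "\<forall>l\<in>{i,j,k}. of_int (p l) * x l \<in> \<int> \<and> 2 * x l \<notin> \<int>" "x i + x j + x k = 0"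
    using exists_exceptional_angles[of i j k p] distinct pos assms(4-6) by auto
  have "x 1 + x 2 + x 3 = (\<Sum>l\<in>{1,2,3}. x l)"
    by simp
  also have "\<dots> = (\<Sum>l\<in>{i,j,k}. x l)"
    by (simp only: assms(3))
  also have "\<dots> = x i + x j + x k"
    using distinct by simp
  finally have "x 1 + x 2 + x 3 \<in> \<int>"
    using x(2) by simp
  moreover have "\<forall>l\<in>{1,2,3}. p l \<ge> 0 \<and> of_int (p l) * x l \<in> \<int> \<and> 2 * x l \<notin> \<int>"
    using x(1) pos unfolding assms(3) by auto
  ultimately show ?thesis
    unfolding x_M_pos_iff using exceptional_abelian_character_of_angles by blast
qed

end
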